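(* Assume (H2). Then for any $q,q'\in\mathbb R^d$, $\delta,\delta'>0$ and $T>0$, \[\liminf_{n\to\infty}\inf_{z\in E:|z-nq|<\delta n}\frac1n\log G\bigl(z,nB(q',\delta')\bigr)\ \ge\ \liminf_{n\to\infty}\inf_{z\in E:|z-nq|<\delta n}\frac1n\log\mathbb P_z\bigl(Z(Tn)\in nB(q',\delta'/2)\bigr).\]
   Context: Let $E\subset\mathbb R^d$ be unbounded and $(Z(t))_{t\ge0}$ a continuous-time strong Markov process on $E$ with right-continuous paths having left limits; $\mathbb P_z,\mathbb E_z$ denote probability and expectation given $Z(0)=z$. $G(z,B)=\int_0^\infty\mathbb P_z(Z(t)\in B)\,dt$. For $B\subset\mathbb R^d$ and $n>0$, $nB=\{nx:x\in B\}$; $B(x,r)$ is the open ball of center $x$ and radius $r$. (H2): the function $\hat\varphi(a)=\sup_{z\in E}\sup_{t\in[0,1]}\mathbb E_z(e^{a\cdot(Z(t)-z)})$ is finite for every $a\in\mathbb R^d$. *)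

theory Defs
  imports "HOL-Probability.Probability"
begin

definition eln :: "ennreal \<Rightarrow> ereal" where
  "eln x = (if x = 0 then -\<infinity> else if x = \<infinity> then \<infinity> else ereal (ln (enn2real x)))"

text \<open>M: underlying measurable space; F: filtration (indexed by real time);
  P z: the law P_z (process started at z); Z t \<omega>: position at time t.
  The strong Markov property is stated for finite nonnegative stopping times
  and one-dimensional marginals of the shifted process.\<close>
definition strong_markov_process ::
  "'a::euclidean_space set \<Rightarrow> 'w measure \<Rightarrow> (real \<Rightarrow> 'w measure) \<Rightarrow> ('a \<Rightarrow> 'w measure)
   \<Rightarrow> (real \<Rightarrow> 'w \<Rightarrow> 'a) \<Rightarrow> bool" where
  "strong_markov_process E M F P Z \<longleftrightarrow>
     filtration (space M) F \<and> (\<forall>t. sets (F t) \<subseteq> sets M) \<and>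
     (\<forall>z\<in>E. prob_space (P z) \<and> sets (P z) = sets M) \<and>
     (\<forall>t\<ge>0. Z t \<in> F t \<rightarrow>\<^sub>M borel) \<and>
     (\<forall>\<omega>\<in>space M. \<forall>t\<ge>0. Z t \<omega> \<in> E) \<and>
     (\<forall>z\<in>E. AE \<omega> in P z. Z 0 \<omega> = z) \<and>
     (\<forall>\<omega>\<in>space M. \<forall>t\<ge>0. continuous (at_right t) (\<lambda>s. Z s \<omega>) \<and>
         (t > 0 \<longrightarrow> (\<exists>l. ((\<lambda>s. Z s \<omega>) \<longlongrightarrow> l) (at_left t)))) \<and>
     (\<forall>t\<ge>0. \<forall>B\<in>sets borel.
         (\<lambda>z. measure (P z) {\<omega>\<in>space M. Z t \<omega> \<in> B}) \<in> borel_measurable (restrict_space borel E)) \<and>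
     (\<forall>z\<in>E. \<forall>\<tau>. stopping_time F \<tau> \<and> (\<forall>\<omega>\<in>space M. 0 \<le> \<tau> \<omega>) \<longrightarrow>
        (\<forall>t\<ge>0. \<forall>B\<in>sets borel. \<forall>A\<in>sets (filtration.pre_sigma (space M) F \<tau>).
           measure (P z) (A \<inter> {\<omega>\<in>space M. Z (\<tau> \<omega> + t) \<omega> \<in> B}) =
           (\<integral>\<omega>. indicator A \<omega> * measure (P (Z (\<tau> \<omega>) \<omega>)) {\<omega>'\<in>space M. Z t \<omega>' \<in> B} \<partial>P z)))"

definition green :: "'w measure \<Rightarrow> ('a \<Rightarrow> 'w measure) \<Rightarrow> (real \<Rightarrow> 'w \<Rightarrow> 'a) \<Rightarrow> 'a \<Rightarrow> 'a set \<Rightarrow> ennreal" where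
  "green M P Z z B = (\<integral>\<^sup>+ t\<in>{0..}. emeasure (P z) {\<omega>\<in>space M. Z t \<omega> \<in> B} \<partial>lborel)"

definition H2 :: "'a::euclidean_space set \<Rightarrow> ('a \<Rightarrow> 'w measure) \<Rightarrow> (real \<Rightarrow> 'w \<Rightarrow> 'a) \<Rightarrow> bool" where
  "H2 E P Z \<longleftrightarrow> (\<forall>a. (SUP z\<in>E. SUP t\<in>{0..1}. \<integral>\<^sup>+ \<omega>. ennreal (exp (a \<bullet> (Z t \<omega> - z))) \<partial>P z) < \<infinity>)"

end

theory Submission
  imports Defs
begin

text \<open>By (H2) and a Chernoff bound, the displacement of the process over a time span of at most 1
  has exponential tails of any prescribed rate \<mu>, uniformly in the starting point. With the Markov
  property at time Tn this gives, for every s in [0,1],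
  P_z(Z(Tn + s) in nB(q',\<delta>')) \<ge> P_z(Z(Tn) in nB(q',\<delta>'/2)) - K exp(-\<mu> n),
  and integrating over s bounds G(z, nB(q',\<delta>')) from below by the same quantity. Taking \<mu> larger
  than minus the right-hand liminf makes the error term negligible on the exponential scale.\<close>

lemma LIMSEQ_exp_neg_mult:
  assumes "a > 0"
  shows "(\<lambda>n. exp (- a * real n)) \<longlonglongrightarrow> 0"
proof -
  have "(\<lambda>n. exp (- a) ^ n) \<longlonglongrightarrow> 0"
    using assms by (intro LIMSEQ_power_zero) simp
  then show ?thesis
    by (simp add: exp_of_nat_mult[symmetric] mult.commute)
qed

lemma eventually_exp_dominates:
  fixes c c' \<mu> K :: real
  assumes "c < c'" and "- \<mu> < c'"
  shows "\<forall>\<^sub>F n in sequentially. exp (real n * c) + K * exp (- \<mu> * real n) \<le> exp (real n * c')"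
proof -
  have "(\<lambda>n. exp (- (c' - c) * real n) + K * exp (- (\<mu> + c') * real n)) \<longlonglongrightarrow> 0 + K * 0"
    using assms by (intro tendsto_add tendsto_mult_left LIMSEQ_exp_neg_mult) auto
  then have "\<forall>\<^sub>F n in sequentially. exp (- (c' - c) * real n) + K * exp (- (\<mu> + c') * real n) < 1"
    by (intro order_tendstoD(2)) auto
  then show ?thesis
  proof eventually_elim
    case (elim n)
    have "exp (real n * c) + K * exp (- \<mu> * real n)
        = exp (real n * c') * (exp (- (c' - c) * real n) + K * exp (- (\<mu> + c') * real n))"
      by (simp add: distrib_left mult_ac exp_add[symmetric] algebra_simps)
    also have "\<dots> \<le> exp (real n * c')"
      using elim by simp
    finally show ?case .
  qed
qed

lemma ereal_le_scaled_eln_iff: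
  assumes "N > 0"
  shows "ereal c \<le> ereal (1 / N) * eln G \<longleftrightarrow> ennreal (exp (N * c)) \<le> G"
proof (cases "G = 0 \<or> G = \<infinity>")
  case True
  then show ?thesis
    using assms by (auto simp: eln_def)
next
  case False
  then have G: "G = ennreal (enn2real G)" "0 < enn2real G"
    by (auto simp: less_top enn2real_positive_iff zero_less_iff_neq_zero)
  have "ereal c \<le> ereal (1 / N) * eln G \<longleftrightarrow> N * c \<le> ln (enn2real G)"
    using False assms by (simp add: eln_def field_simps)
  also have "\<dots> \<longleftrightarrow> exp (N * c) \<le> enn2real G"
    using G(2) by (simp add: ln_ge_iff)
  also have "\<dots> \<longleftrightarrow> ennreal (exp (N * c)) \<le> G"
    by (subst (2) G(1)) (simp add: ennreal_le_iff)
  finally show ?thesis .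
qed

lemma liminf_INF_scaled_eln_mono:
  fixes p :: "nat \<Rightarrow> 'z \<Rightarrow> real" and g :: "nat \<Rightarrow> 'z \<Rightarrow> ennreal"
  assumes shift: "\<And>\<mu>. \<mu> > 0 \<Longrightarrow> \<exists>K. \<forall>n\<ge>1. \<forall>z\<in>S n. ennreal (p n z - K * exp (- \<mu> * real n)) \<le> g n z"
  shows "liminf (\<lambda>n. INF z\<in>S n. ereal (1 / real n) * eln (ennreal (p n z)))
         \<le> liminf (\<lambda>n. INF z\<in>S n. ereal (1 / real n) * eln (g n z))"
    (is "liminf ?b \<le> liminf ?a")
proof (rule dense_le)
  fix x assume "x < liminf ?b"
  then obtain c where c: "x < ereal c" "ereal c < liminf ?b"
    using ereal_dense2 by blast
  then obtain c' where c': "c < c'" "ereal c' < liminf ?b"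
    using ereal_dense2[OF c(2)] by auto
  define \<mu> where "\<mu> = \<bar>c'\<bar> + 1"
  have "\<mu> > 0"
    by (simp add: \<mu>_def add_nonneg_pos)
  then obtain K where K: "\<forall>n\<ge>1. \<forall>z\<in>S n. ennreal (p n z - K * exp (- \<mu> * real n)) \<le> g n z"
    using shift by blast
  have "\<forall>\<^sub>F n in sequentially. ereal c' < ?b n"
    using c'(2) by (rule less_LiminfD)
  moreover have "\<forall>\<^sub>F n in sequentially. exp (real n * c) + K * exp (- \<mu> * real n) \<le> exp (real n * c')"
    using c'(1) by (intro eventually_exp_dominates) (auto simp: \<mu>_def)
  moreover have "\<forall>\<^sub>F n in sequentially. 1 \<le> n"
    by (rule eventually_ge_at_top)
  ultimately have "\<forall>\<^sub>F n in sequentially. ereal c \<le> ?a n"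
  proof eventually_elim
    case (elim n)
    show ?case
    proof (rule INF_greatest)
      fix z assume z: "z \<in> S n"
      have n: "real n > 0"
        using elim(3) by simp
      have "ereal c' \<le> ereal (1 / real n) * eln (ennreal (p n z))"
        using elim(1) INF_lower[OF z, of "\<lambda>z. ereal (1 / real n) * eln (ennreal (p n z))"] by simp
      then have "exp (real n * c') \<le> p n z"
        unfolding ereal_le_scaled_eln_iff[OF n] by (simp add: ennreal_le_iff2)
      then have "ennreal (exp (real n * c)) \<le> ennreal (p n z - K * exp (- \<mu> * real n))"
        using elim(2) by (intro ennreal_leI) simp
      also have "\<dots> \<le> g n z"
        using K elim(3) z by blast
      finally show "ereal c \<le> ereal (1 / real n) * eln (g n z)"
        unfolding ereal_le_scaled_eln_iff[OF n] .
    qed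
  qed
  then have "ereal c \<le> liminf ?a"
    by (rule Liminf_bounded)
  then show "x \<le> liminf ?a"
    using c(1) by simp
qed

lemma exp_norm_le_sum_exp_inner:
  fixes x :: "'a::euclidean_space"
  assumes "0 \<le> \<kappa>"
  shows "exp (\<kappa> * norm x) \<le> (\<Sum>b\<in>Basis. exp (((\<kappa> * sqrt DIM('a)) *\<^sub>R b) \<bullet> x)
                                         + exp ((- ((\<kappa> * sqrt DIM('a)) *\<^sub>R b)) \<bullet> x))"
    (is "_ \<le> sum ?f Basis")
proof -
  have "infnorm x \<in> (\<lambda>b. \<bar>x \<bullet> b\<bar>) ` Basis"
    unfolding infnorm_Max by (rule Max_in) auto
  then obtain b where b: "b \<in> Basis" "infnorm x = \<bar>x \<bullet> b\<bar>"
    by blast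
  define u where "u = ((\<kappa> * sqrt DIM('a)) *\<^sub>R b) \<bullet> x"
  have "\<kappa> * norm x \<le> \<kappa> * (sqrt DIM('a) * infnorm x)"
    using assms norm_le_infnorm by (rule mult_left_mono[rotated])
  also have "\<dots> = \<bar>u\<bar>"
    using assms b(2) by (simp add: u_def abs_mult inner_commute)
  finally have "exp (\<kappa> * norm x) \<le> exp \<bar>u\<bar>"
    by simp
  also have "\<dots> \<le> exp u + exp (- u)"
    by (cases "u \<ge> 0") (simp_all add: add_increasing add_increasing2)
  also have "\<dots> = ?f b"
    by (simp add: u_def)
  also have "\<dots> \<le> sum ?f Basis"
    using b(1) by (intro member_le_sum) (simp_all add: add_nonneg_nonneg)
  finally show ?thesis .
qed

lemma emeasure_norm_ge_le_exp_moments: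
  fixes X :: "'w \<Rightarrow> 'a::euclidean_space"
  assumes X: "X \<in> borel_measurable Q" and \<kappa>: "0 \<le> \<kappa>"
  defines "a b \<equiv> (\<kappa> * sqrt DIM('a)) *\<^sub>R b"
  shows "ennreal (exp (\<kappa> * r)) * emeasure Q {\<omega>\<in>space Q. r \<le> norm (X \<omega>)}
           \<le> (\<Sum>b\<in>Basis. (\<integral>\<^sup>+\<omega>. exp (a b \<bullet> X \<omega>) \<partial>Q) + (\<integral>\<^sup>+\<omega>. exp (- a b \<bullet> X \<omega>) \<partial>Q))"
proof -
  have "{\<omega>\<in>space Q. r \<le> norm (X \<omega>)} \<in> sets Q"
    using X by measurable
  then have "ennreal (exp (\<kappa> * r)) * emeasure Q {\<omega>\<in>space Q. r \<le> norm (X \<omega>)}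
      = (\<integral>\<^sup>+\<omega>. ennreal (exp (\<kappa> * r)) * indicator {\<omega>\<in>space Q. r \<le> norm (X \<omega>)} \<omega> \<partial>Q)"
    by (simp add: nn_integral_cmult_indicator)
  also have "\<dots> \<le> (\<integral>\<^sup>+\<omega>. ennreal (exp (\<kappa> * norm (X \<omega>))) \<partial>Q)"
    using \<kappa> by (intro nn_integral_mono) (auto simp: indicator_def intro: mult_left_mono)
  also have "\<dots> \<le> (\<integral>\<^sup>+\<omega>. (\<Sum>b\<in>Basis. ennreal (exp (a b \<bullet> X \<omega>)) + ennreal (exp (- a b \<bullet> X \<omega>))) \<partial>Q)"
  proof (intro nn_integral_mono)
    fix \<omega>
    have "ennreal (exp (\<kappa> * norm (X \<omega>))) \<le> ennreal (\<Sum>b\<in>Basis. exp (a b \<bullet> X \<omega>) + exp (- a b \<bullet> X \<omega>))"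
      using exp_norm_le_sum_exp_inner[OF \<kappa>, of "X \<omega>"] unfolding a_def by (rule ennreal_leI)
    also have "\<dots> = (\<Sum>b\<in>Basis. ennreal (exp (a b \<bullet> X \<omega>)) + ennreal (exp (- a b \<bullet> X \<omega>)))"
      by (simp add: sum_ennreal[symmetric] del: sum_ennreal)
    finally show "ennreal (exp (\<kappa> * norm (X \<omega>)))
        \<le> (\<Sum>b\<in>Basis. ennreal (exp (a b \<bullet> X \<omega>)) + ennreal (exp (- a b \<bullet> X \<omega>)))" .
  qed
  also have "\<dots> = (\<Sum>b\<in>Basis. (\<integral>\<^sup>+\<omega>. exp (a b \<bullet> X \<omega>) \<partial>Q) + (\<integral>\<^sup>+\<omega>. exp (- a b \<bullet> X \<omega>) \<partial>Q))"
    using X by (simp add: nn_integral_sum nn_integral_add)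
  finally show ?thesis .
qed

lemma prob_ball_ge_one_minus_tail:
  fixes X :: "'w \<Rightarrow> 'a::euclidean_space"
  assumes "prob_space Q" and X: "X \<in> borel_measurable Q" and y: "dist c y < r"
  shows "1 - measure Q {\<omega>\<in>space Q. \<rho> \<le> norm (X \<omega> - y)} \<le> measure Q {\<omega>\<in>space Q. X \<omega> \<in> ball c (r + \<rho>)}"
proof -
  interpret prob_space Q by fact
  have "space Q - {\<omega>\<in>space Q. X \<omega> \<in> ball c (r + \<rho>)} \<subseteq> {\<omega>\<in>space Q. \<rho> \<le> norm (X \<omega> - y)}"
  proof (intro subsetI)
    fix \<omega> assume "\<omega> \<in> space Q - {\<omega>\<in>space Q. X \<omega> \<in> ball c (r + \<rho>)}"
    then show "\<omega> \<in> {\<omega>\<in>space Q. \<rho> \<le> norm (X \<omega> - y)}"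
      using y dist_triangle[of c "X \<omega>" y] by (auto simp: dist_norm norm_minus_commute)
  qed
  then have "measure Q (space Q - {\<omega>\<in>space Q. X \<omega> \<in> ball c (r + \<rho>)})
      \<le> measure Q {\<omega>\<in>space Q. \<rho> \<le> norm (X \<omega> - y)}"
    using X by (intro finite_measure_mono) measurable
  moreover have "{\<omega>\<in>space Q. X \<omega> \<in> ball c (r + \<rho>)} = X -` ball c (r + \<rho>) \<inter> space Q"
    by auto
  then have "{\<omega>\<in>space Q. X \<omega> \<in> ball c (r + \<rho>)} \<in> events"
    using measurable_sets[OF X] by simp
  ultimately show ?thesis
    using prob_compl by simp
qed

lemma strong_markov_processD:
  assumes "strong_markov_process E M F P Z"
  shows "filtration (space M) F"
    and "sets (F t) \<subseteq> sets M"
    and "z \<in> E \<Longrightarrow> prob_space (P z)"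
    and "z \<in> E \<Longrightarrow> sets (P z) = sets M"
    and "t \<ge> 0 \<Longrightarrow> Z t \<in> F t \<rightarrow>\<^sub>M borel"
    and "\<omega> \<in> space M \<Longrightarrow> t \<ge> 0 \<Longrightarrow> Z t \<omega> \<in> E"
    and "t \<ge> 0 \<Longrightarrow> B \<in> sets borel \<Longrightarrow>
         (\<lambda>z. measure (P z) {\<omega>\<in>space M. Z t \<omega> \<in> B}) \<in> borel_measurable (restrict_space borel E)"
    and "z \<in> E \<Longrightarrow> stopping_time F \<tau> \<Longrightarrow> (\<And>\<omega>. \<omega> \<in> space M \<Longrightarrow> 0 \<le> \<tau> \<omega>) \<Longrightarrow> t \<ge> 0 \<Longrightarrow>
         B \<in> sets borel \<Longrightarrow> A \<in> sets (filtration.pre_sigma (space M) F \<tau>) \<Longrightarrow>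
         measure (P z) (A \<inter> {\<omega>\<in>space M. Z (\<tau> \<omega> + t) \<omega> \<in> B}) =
           (\<integral>\<omega>. indicator A \<omega> * measure (P (Z (\<tau> \<omega>) \<omega>)) {\<omega>'\<in>space M. Z t \<omega>' \<in> B} \<partial>P z)"
  using assms unfolding strong_markov_process_def by simp_all

lemma strong_markov_process_law:
  assumes smp: "strong_markov_process E M F P Z" and z: "z \<in> E"
  shows "prob_space (P z)" and "sets (P z) = sets M" and "space (P z) = space M"
  using strong_markov_processD(3,4)[OF smp z] sets_eq_imp_space_eq by auto

lemma strong_markov_process_measurable:
  assumes smp: "strong_markov_process E M F P Z" and z: "z \<in> E" and t: "t \<ge> 0"
  shows "Z t \<in> borel_measurable (P z)" and "Z t \<in> measurable (P z) (restrict_space borel E)"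
proof -
  have "Z t \<in> borel_measurable M"
    by (rule borel_measurable_subalgebra[OF strong_markov_processD(2)[OF smp]
          filtration.space_F[OF strong_markov_processD(1)[OF smp]] strong_markov_processD(5)[OF smp t]])
  then show Zm: "Z t \<in> borel_measurable (P z)"
    using measurable_cong_sets[OF strong_markov_process_law(2)[OF smp z] refl] by blast
  have "Z t \<in> space (P z) \<rightarrow> E"
    using strong_markov_processD(6)[OF smp _ t] strong_markov_process_law(3)[OF smp z] by auto
  then show "Z t \<in> measurable (P z) (restrict_space borel E)"
    by (rule measurable_restrict_space2[OF _ Zm])
qed

lemma integrable_transition_prob:
  assumes smp: "strong_markov_process E M F P Z" and z: "z \<in> E" and \<tau>: "\<tau> \<ge> 0" and s: "s \<ge> 0"
    and B: "B \<in> sets borel"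
  shows "integrable (P z) (\<lambda>\<omega>. measure (P (Z \<tau> \<omega>)) {\<omega>'\<in>space M. Z s \<omega>' \<in> B})"
proof (rule finite_measure.integrable_const_bound[where B=1])
  show "finite_measure (P z)"
    using strong_markov_process_law(1)[OF smp z] by (rule prob_space.finite_measure)
  have "prob_space (P (Z \<tau> \<omega>))" if "\<omega> \<in> space (P z)" for \<omega>
    using that strong_markov_process_law(1,3)[OF smp] strong_markov_process_law(3)[OF smp z]
      strong_markov_processD(6)[OF smp _ \<tau>] by auto
  then show "AE \<omega> in P z. norm (measure (P (Z \<tau> \<omega>)) {\<omega>'\<in>space M. Z s \<omega>' \<in> B}) \<le> 1"
    by (intro AE_I2) (simp add: prob_space.prob_le_1)
  show "(\<lambda>\<omega>. measure (P (Z \<tau> \<omega>)) {\<omega>'\<in>space M. Z s \<omega>' \<in> B}) \<in> borel_measurable (P z)"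
    using measurable_comp[OF strong_markov_process_measurable(2)[OF smp z \<tau>]
        strong_markov_processD(7)[OF smp s B]]
    unfolding o_def .
qed

lemma markov_property_const_time:
  assumes smp: "strong_markov_process E M F P Z" and z: "z \<in> E" and \<tau>: "\<tau> \<ge> 0" and s: "s \<ge> 0"
    and B: "B \<in> sets borel"
  shows "measure (P z) {\<omega>\<in>space M. Z (\<tau> + s) \<omega> \<in> B} =
           (\<integral>\<omega>. measure (P (Z \<tau> \<omega>)) {\<omega>'\<in>space M. Z s \<omega>' \<in> B} \<partial>P z)"
proof -
  have "space M \<in> sets (filtration.pre_sigma (space M) F (\<lambda>_. \<tau>))"
    using sets.top[of "filtration.pre_sigma (space M) F (\<lambda>_. \<tau>)"]
    by (simp add: filtration.space_pre_sigma[OF strong_markov_processD(1)[OF smp]])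
  from strong_markov_processD(8)[OF smp z stopping_time_const _ s B this] \<tau>
  have "measure (P z) (space M \<inter> {\<omega>\<in>space M. Z (\<tau> + s) \<omega> \<in> B}) =
      (\<integral>\<omega>. indicator (space M) \<omega> * measure (P (Z \<tau> \<omega>)) {\<omega>'\<in>space M. Z s \<omega>' \<in> B} \<partial>P z)"
    by simp
  also have "\<dots> = (\<integral>\<omega>. measure (P (Z \<tau> \<omega>)) {\<omega>'\<in>space M. Z s \<omega>' \<in> B} \<partial>P z)"
    by (rule Bochner_Integration.integral_cong) (auto simp: strong_markov_process_law(3)[OF smp z])
  finally show ?thesis
    by (simp add: Int_absorb1)
qed

lemma H2_tail_bound:
  fixes E :: "'a::euclidean_space set"
  assumes smp: "strong_markov_process E M F P Z" and h2: "H2 E P Z" and \<kappa>: "0 \<le> \<kappa>"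
  obtains K where "\<And>y s r. y \<in> E \<Longrightarrow> s \<in> {0..1} \<Longrightarrow>
                      measure (P y) {\<omega>\<in>space M. r \<le> norm (Z s \<omega> - y)} \<le> K * exp (- \<kappa> * r)"
proof -
  define H where "H a = (SUP z\<in>E. SUP t\<in>{0..1}. \<integral>\<^sup>+ \<omega>. ennreal (exp (a \<bullet> (Z t \<omega> - z))) \<partial>P z)" for a
  define a where "a b = (\<kappa> * sqrt DIM('a)) *\<^sub>R b" for b :: 'a
  define K where "K = (\<Sum>b\<in>Basis. H (a b) + H (- a b))"
  have "K < \<infinity>"
    using h2 unfolding H2_def K_def H_def[symmetric] by (simp add: sum_Pinfty)
  have "measure (P y) {\<omega>\<in>space M. r \<le> norm (Z s \<omega> - y)} \<le> enn2real K * exp (- \<kappa> * r)"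
    if y: "y \<in> E" and s: "s \<in> {0..1}" for y s r
  proof -
    interpret prob_space "P y"
      using strong_markov_process_law(1)[OF smp y] .
    have "(\<lambda>\<omega>. Z s \<omega> - y) \<in> borel_measurable (P y)"
      using strong_markov_process_measurable(1)[OF smp y] s by simp
    from emeasure_norm_ge_le_exp_moments[OF this \<kappa>, of r]
    have "ennreal (exp (\<kappa> * r)) * emeasure (P y) {\<omega>\<in>space M. r \<le> norm (Z s \<omega> - y)}
        \<le> (\<Sum>b\<in>Basis. (\<integral>\<^sup>+\<omega>. exp (a b \<bullet> (Z s \<omega> - y)) \<partial>P y) + (\<integral>\<^sup>+\<omega>. exp (- a b \<bullet> (Z s \<omega> - y)) \<partial>P y))"
      by (simp add: a_def strong_markov_process_law(3)[OF smp y])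
    also have "\<dots> \<le> K"
      unfolding K_def H_def using y s
      by (intro sum_mono add_mono SUP_upper2[OF y] SUP_upper[OF s] order_refl)
    finally have "ennreal (exp (\<kappa> * r) * measure (P y) {\<omega>\<in>space M. r \<le> norm (Z s \<omega> - y)}) \<le> ennreal (enn2real K)"
      using \<open>K < \<infinity>\<close> by (simp add: emeasure_eq_measure ennreal_mult' less_top)
    then have "exp (\<kappa> * r) * measure (P y) {\<omega>\<in>space M. r \<le> norm (Z s \<omega> - y)} \<le> enn2real K"
      by (simp add: ennreal_le_iff)
    then show ?thesis
      by (simp add: exp_minus field_simps)
  qed
  then show ?thesis
    using that by blast
qed

lemma prob_ball_after_shift_ge:
  assumes smp: "strong_markov_process E M F P Z" and z: "z \<in> E" and \<tau>: "\<tau> \<ge> 0" and s: "s \<ge> 0"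
    and tail: "\<And>y. y \<in> E \<Longrightarrow> measure (P y) {\<omega>\<in>space M. \<rho> \<le> norm (Z s \<omega> - y)} \<le> \<epsilon>"
  shows "measure (P z) {\<omega>\<in>space M. Z \<tau> \<omega> \<in> ball c r} - \<epsilon>
           \<le> measure (P z) {\<omega>\<in>space M. Z (\<tau> + s) \<omega> \<in> ball c (r + \<rho>)}"
proof -
  interpret prob_space "P z"
    using strong_markov_process_law(1)[OF smp z] .
  note space_Pz = strong_markov_process_law(3)[OF smp z]
  define A where "A = {\<omega>\<in>space M. Z \<tau> \<omega> \<in> ball c r}"
  define g where "g y = measure (P y) {\<omega>\<in>space M. Z s \<omega> \<in> ball c (r + \<rho>)}" for y
  have "A = Z \<tau> -` ball c r \<inter> space (P z)"
    by (auto simp: A_def space_Pz)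
  then have A: "A \<in> sets (P z)"
    using measurable_sets[OF strong_markov_process_measurable(1)[OF smp z \<tau>]] by simp
  have "0 \<le> \<epsilon>"
    by (rule order_trans[OF measure_nonneg tail[OF z]])
  have pointwise: "indicator A \<omega> - \<epsilon> \<le> g (Z \<tau> \<omega>)" for \<omega>
  proof (cases "\<omega> \<in> A")
    case True
    then have y: "Z \<tau> \<omega> \<in> E" "dist c (Z \<tau> \<omega>) < r"
      using strong_markov_processD(6)[OF smp _ \<tau>] by (auto simp: A_def)
    have "1 - \<epsilon> \<le> 1 - measure (P (Z \<tau> \<omega>)) {\<omega>'\<in>space M. \<rho> \<le> norm (Z s \<omega>' - Z \<tau> \<omega>)}"
      using tail[OF y(1)] by simp
    also have "\<dots> \<le> g (Z \<tau> \<omega>)"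
      using prob_ball_ge_one_minus_tail[OF strong_markov_process_law(1)[OF smp y(1)]
          strong_markov_process_measurable(1)[OF smp y(1) s] y(2)]
      by (simp add: g_def strong_markov_process_law(3)[OF smp y(1)])
    finally show ?thesis
      using True by simp
  next
    case False
    have "0 \<le> g (Z \<tau> \<omega>)"
      unfolding g_def by (rule measure_nonneg)
    then show ?thesis
      using False \<open>0 \<le> \<epsilon>\<close> by simp
  qed
  have indicator_A: "integrable (P z) (indicator A :: _ \<Rightarrow> real)"
    using A by (intro integrable_real_indicator) (simp_all add: emeasure_eq_measure)
  have "(\<integral>\<omega>. indicator A \<omega> - \<epsilon> \<partial>P z) \<le> (\<integral>\<omega>. g (Z \<tau> \<omega>) \<partial>P z)"
  proof (rule integral_mono)
    show "integrable (P z) (\<lambda>\<omega>. indicator A \<omega> - \<epsilon>)"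
      using indicator_A by simp
    show "integrable (P z) (\<lambda>\<omega>. g (Z \<tau> \<omega>))"
      unfolding g_def by (rule integrable_transition_prob[OF smp z \<tau> s]) simp
  qed (rule pointwise)
  moreover have "(\<integral>\<omega>. indicator A \<omega> - \<epsilon> \<partial>P z) = measure (P z) A - \<epsilon>"
    using A by (simp add: Bochner_Integration.integral_diff[OF indicator_A integrable_const] emeasure_eq_measure prob_space)
  moreover have "(\<integral>\<omega>. g (Z \<tau> \<omega>) \<partial>P z) = measure (P z) {\<omega>\<in>space M. Z (\<tau> + s) \<omega> \<in> ball c (r + \<rho>)}"
    using markov_property_const_time[OF smp z \<tau> s, of "ball c (r + \<rho>)"] by (simp add: g_def)
  ultimately show ?thesis
    by (simp add: A_def)
qed

lemma green_ge_of_prob_ge: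
  assumes smp: "strong_markov_process E M F P Z" and z: "z \<in> E" and \<tau>: "\<tau> \<ge> 0"
    and low: "\<And>s. s \<in> {0..1} \<Longrightarrow> c \<le> measure (P z) {\<omega>\<in>space M. Z (\<tau> + s) \<omega> \<in> B}"
  shows "ennreal c \<le> green M P Z z B"
proof -
  interpret prob_space "P z"
    using strong_markov_process_law(1)[OF smp z] .
  have "ennreal c = (\<integral>\<^sup>+ t. ennreal c * indicator {\<tau>..\<tau>+1} t \<partial>lborel)"
    by (simp add: nn_integral_cmult_indicator)
  also have "\<dots> \<le> (\<integral>\<^sup>+ t. emeasure (P z) {\<omega>\<in>space M. Z t \<omega> \<in> B} * indicator {0..} t \<partial>lborel)"
  proof (intro nn_integral_mono)
    fix t :: real
    show "ennreal c * indicator {\<tau>..\<tau>+1} t \<le> emeasure (P z) {\<omega>\<in>space M. Z t \<omega> \<in> B} * indicator {0..} t"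
    proof (cases "t \<in> {\<tau>..\<tau>+1}")
      case True
      then have "c \<le> measure (P z) {\<omega>\<in>space M. Z t \<omega> \<in> B}"
        using low[of "t - \<tau>"] by simp
      then show ?thesis
        using True \<tau> by (simp add: emeasure_eq_measure ennreal_leI)
    qed simp
  qed
  also have "\<dots> = green M P Z z B"
    by (simp add: green_def)
  finally show ?thesis .
qed

lemma green_scaled_ball_ge:
  fixes E :: "'a::euclidean_space set"
  assumes smp: "strong_markov_process E M F P Z" and h2: "H2 E P Z"
    and \<delta>': "\<delta>' > 0" and T: "T \<ge> 0" and \<mu>: "\<mu> > 0"
  obtains K where "\<And>n z. n \<ge> 1 \<Longrightarrow> z \<in> E \<Longrightarrow>
    ennreal (measure (P z) {\<omega>\<in>space M. Z (T * real n) \<omega> \<in> (\<lambda>x. real n *\<^sub>R x) ` ball q' (\<delta>' / 2)}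
             - K * exp (- \<mu> * real n))
    \<le> green M P Z z ((\<lambda>x. real n *\<^sub>R x) ` ball q' \<delta>')"
proof -
  obtain K where tail: "\<And>y s r. y \<in> E \<Longrightarrow> s \<in> {0..1} \<Longrightarrow>
      measure (P y) {\<omega>\<in>space M. r \<le> norm (Z s \<omega> - y)} \<le> K * exp (- (2 * \<mu> / \<delta>') * r)"
    using H2_tail_bound[OF smp h2, of "2 * \<mu> / \<delta>'"] \<mu> \<delta>' by auto
  have "ennreal (measure (P z) {\<omega>\<in>space M. Z (T * real n) \<omega> \<in> (\<lambda>x. real n *\<^sub>R x) ` ball q' (\<delta>' / 2)}
             - K * exp (- \<mu> * real n))
        \<le> green M P Z z ((\<lambda>x. real n *\<^sub>R x) ` ball q' \<delta>')" if n: "n \<ge> 1" and z: "z \<in> E" for n z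
  proof -
    define r where "r = real n * (\<delta>' / 2)"
    have balls: "(\<lambda>x. real n *\<^sub>R x) ` ball q' (\<delta>' / 2) = ball (real n *\<^sub>R q') r"
        "(\<lambda>x. real n *\<^sub>R x) ` ball q' \<delta>' = ball (real n *\<^sub>R q') (r + r)"
      using n by (simp_all add: ball_scale r_def algebra_simps)
    have eps: "K * exp (- (2 * \<mu> / \<delta>') * r) = K * exp (- \<mu> * real n)"
      using \<delta>' by (simp add: r_def)
    have "measure (P z) {\<omega>\<in>space M. Z (T * real n) \<omega> \<in> ball (real n *\<^sub>R q') r} - K * exp (- \<mu> * real n)
        \<le> measure (P z) {\<omega>\<in>space M. Z (T * real n + s) \<omega> \<in> ball (real n *\<^sub>R q') (r + r)}"
      if s: "s \<in> {0..1}" for s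
      by (rule prob_ball_after_shift_ge[OF smp z _ _ tail[of _ s r, OF _ s, unfolded eps]]) (use T s in auto)
    then show ?thesis
      unfolding balls using T by (intro green_ge_of_prob_ge[OF smp z, of "T * real n"]) auto
  qed
  then show ?thesis
    using that by blast
qed

theorem mainTheorem8:
  fixes E :: "'a::euclidean_space set" and M :: "'w measure" and F :: "real \<Rightarrow> 'w measure"
    and P :: "'a \<Rightarrow> 'w measure" and Z :: "real \<Rightarrow> 'w \<Rightarrow> 'a"
    and q q' :: 'a and \<delta> \<delta>' T :: real
  assumes "\<not> bounded E"
    and "strong_markov_process E M F P Z"
    and "H2 E P Z"
    and "\<delta> > 0" and "\<delta>' > 0" and "T > 0"
  shows "liminf (\<lambda>n::nat. INF z\<in>{z\<in>E. norm (z - real n *\<^sub>R q) < \<delta> * real n}.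
             ereal (1 / real n) * eln (green M P Z z ((\<lambda>x. real n *\<^sub>R x) ` ball q' \<delta>')))
         \<ge> liminf (\<lambda>n::nat. INF z\<in>{z\<in>E. norm (z - real n *\<^sub>R q) < \<delta> * real n}.
             ereal (1 / real n) * eln (emeasure (P z) {\<omega>\<in>space M. Z (T * real n) \<omega> \<in> (\<lambda>x. real n *\<^sub>R x) ` ball q' (\<delta>' / 2)}))"
proof -
  let ?S = "\<lambda>n::nat. {z\<in>E. norm (z - real n *\<^sub>R q) < \<delta> * real n}"
  let ?A = "\<lambda>n::nat. {\<omega>\<in>space M. Z (T * real n) \<omega> \<in> (\<lambda>x. real n *\<^sub>R x) ` ball q' (\<delta>' / 2)}"
  let ?G = "\<lambda>n z. green M P Z z ((\<lambda>x. real n *\<^sub>R x) ` ball q' \<delta>')"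
  have "emeasure (P z) (?A n) = ennreal (measure (P z) (?A n))" if "z \<in> ?S n" for z n
    using that strong_markov_process_law(1)[OF assms(2)]
    by (auto intro: finite_measure.emeasure_eq_measure prob_space.finite_measure)
  then have INF_eq: "(INF z\<in>?S n. ereal (1 / real n) * eln (emeasure (P z) (?A n)))
      = (INF z\<in>?S n. ereal (1 / real n) * eln (ennreal (measure (P z) (?A n))))" for n
    by (intro INF_cong) auto
  have shift: "\<exists>K. \<forall>n\<ge>1. \<forall>z\<in>?S n. ennreal (measure (P z) (?A n) - K * exp (- \<mu> * real n)) \<le> ?G n z"
    if \<mu>: "\<mu> > 0" for \<mu>
  proof -
    obtain K where "\<And>n z. n \<ge> 1 \<Longrightarrow> z \<in> E \<Longrightarrow>
        ennreal (measure (P z) (?A n) - K * exp (- \<mu> * real n)) \<le> ?G n z"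
      using green_scaled_ball_ge[OF assms(2,3,5) less_imp_le[OF assms(6)] \<mu>] by blast
    then show ?thesis
      by blast
  qed
  have "liminf (\<lambda>n. INF z\<in>?S n. ereal (1 / real n) * eln (emeasure (P z) (?A n)))
      = liminf (\<lambda>n. INF z\<in>?S n. ereal (1 / real n) * eln (ennreal (measure (P z) (?A n))))"
    by (simp only: INF_eq)
  also have "\<dots> \<le> liminf (\<lambda>n. INF z\<in>?S n. ereal (1 / real n) * eln (?G n z))"
    by (rule liminf_INF_scaled_eln_mono[OF shift])
  finally show ?thesis .
qed

end
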